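(* Assume that $(\mathcal{H}_T)$, $(\mathcal{H}_\varphi)$, $(\mathcal{H}_K)$ and $(\mathcal{H}_0)$ hold and $m\in V^*$. Fix $a\in A$ and define the variational selection $S_a\colon C\to 2^C$ by letting $S_a(w)$ be the set of all $u\in K(w)$ such that $\langle T(a,u),v-u\rangle+\varphi(v)-\varphi(u)\ge\langle m,v-u\rangle$ for all $v\in K(w)$. Then the graph of $S_a$ is sequentially weakly closed: if $\{w_n\},\{u_n\}\subset C$, $u_n\in S_a(w_n)$, $w_n\rightharpoonup w$ and $u_n\rightharpoonup u$ weakly in $V$, then $u\in S_a(w)$. Moreover, the set $S_a(C)=\bigcup_{w\in C}S_a(w)$ is bounded in $V$.
   Context: Let $V$ be a real reflexive Banach space with dual $V^*$ and duality pairing $\langle\cdot,\cdot\rangle$, let $C\subseteq V$ be nonempty, closed and convex, let $B$ be a real Banach space and $A\subseteq B$ a nonempty set of parameters, and let $T\colon B\times V\to V^*$, $\varphi\colon V\to\mathbb{R}\cup\{+\infty\}$, $K\colon C\to 2^C$, $m\in V^*$ be given. Hypothesis $(\mathcal{H}_T)$: $T$ is bounded (maps bounded sets to bounded sets); for each $u\in V$ the map $T(\cdot,u)\colon B\to V^*$ is linear; for each $a\in A$ the map $T(a,\cdot)\colon V\to V^*$ is monotone and continuous. Hypothesis $(\mathcal{H}_\varphi)$: $\varphi$ is proper, convex and lower semicontinuous, and $C\subseteq\operatorname{int}(\operatorname{dom}\varphi)$. Hypothesis $(\mathcal{H}_K)$: for every $u\in C$ the set $K(u)\subseteq C$ is nonempty,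 closed and convex, and (i) for any sequence $\{x_n\}\subset C$ with $x_n\rightharpoonup x$ weakly and any $y\in K(x)$ there is a sequence $\{y_n\}\subset C$ with $y_n\in K(x_n)$ and $y_n\to y$ strongly; (ii) for any sequences $\{x_n\},\{y_n\}\subset C$ with $y_n\in K(x_n)$, $x_n\rightharpoonup x$ and $y_n\rightharpoonup y$, one has $y\in K(x)$. Hypothesis $(\mathcal{H}_0)$: there is a bounded set $C_0\subseteq V$ with $K(u)\cap C_0\neq\emptyset$ for every $u\in C$, and a function $h\colon[0,\infty)\to\mathbb{R}$ with $h(t)\to+\infty$ as $t\to+\infty$ such that $\langle T(a,w),w-v_0\rangle+\varphi(w)-\varphi(v_0)\ge h(\|w\|_V)\|w\|_V$ for all $v_0\in C_0$, $a\in A$, $w\in C$. *)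

theory Defs
  imports "HOL-Analysis.Analysis"
begin

(* dual space V* = bounded linear functionals; pairing = blinfun_apply *)

definition reflexive_space :: "'v::banach itself \<Rightarrow> bool" where
  "reflexive_space _ \<longleftrightarrow>
     (\<forall>\<Phi> :: ('v \<Rightarrow>\<^sub>L real) \<Rightarrow>\<^sub>L real. \<exists>v::'v. \<forall>f. blinfun_apply \<Phi> f = blinfun_apply f v)"

definition weak_conv :: "(nat \<Rightarrow> 'v::real_normed_vector) \<Rightarrow> 'v \<Rightarrow> bool" where
  "weak_conv xs x \<longleftrightarrow> (\<forall>f :: 'v \<Rightarrow>\<^sub>L real. (\<lambda>n. blinfun_apply f (xs n)) \<longlonglongrightarrow> blinfun_apply f x)"

definition bounded_operator :: "('b::real_normed_vector \<Rightarrow> 'v::real_normed_vector \<Rightarrow> 'w::real_normed_vector) \<Rightarrow> bool" where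
  "bounded_operator T \<longleftrightarrow>
     (\<forall>S :: ('b \<times> 'v) set. bounded S \<longrightarrow> bounded ((\<lambda>(a, u). T a u) ` S))"

definition monotone_op :: "('v::real_normed_vector \<Rightarrow> ('v \<Rightarrow>\<^sub>L real)) \<Rightarrow> bool" where
  "monotone_op F \<longleftrightarrow> (\<forall>u v. blinfun_apply (F u - F v) (u - v) \<ge> 0)"

definition proper_fun :: "('v \<Rightarrow> ereal) \<Rightarrow> bool" where
  "proper_fun \<phi> \<longleftrightarrow> (\<forall>x. \<phi> x \<noteq> -\<infinity>) \<and> (\<exists>x. \<phi> x \<noteq> \<infinity>)"

definition convex_efun :: "('v::real_vector \<Rightarrow> ereal) \<Rightarrow> bool" where
  "convex_efun \<phi> \<longleftrightarrow> (\<forall>x y t. 0 \<le> t \<and> t \<le> 1 \<longrightarrow>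
     \<phi> (t *\<^sub>R x + (1 - t) *\<^sub>R y) \<le> ereal t * \<phi> x + ereal (1 - t) * \<phi> y)"

definition lsc_efun :: "('v::topological_space \<Rightarrow> ereal) \<Rightarrow> bool" where
  "lsc_efun \<phi> \<longleftrightarrow> (\<forall>c::real. closed {x. \<phi> x \<le> ereal c})"

definition edom :: "('v \<Rightarrow> ereal) \<Rightarrow> 'v set" where
  "edom \<phi> = {x. \<phi> x < \<infinity>}"

definition var_sel ::
  "('b \<Rightarrow> 'v::real_normed_vector \<Rightarrow> ('v \<Rightarrow>\<^sub>L real)) \<Rightarrow> ('v \<Rightarrow> ereal) \<Rightarrow> ('v \<Rightarrow> 'v set)
    \<Rightarrow> ('v \<Rightarrow>\<^sub>L real) \<Rightarrow> 'b \<Rightarrow> 'v \<Rightarrow> 'v set" where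
  "var_sel T \<phi> K m a w = {u \<in> K w. \<forall>v \<in> K w.
      ereal (blinfun_apply (T a u) (v - u)) + \<phi> v - \<phi> u \<ge> ereal (blinfun_apply m (v - u))}"

end

theory Submission
  imports Defs
begin

text \<open>Boundedness: testing the variational inequality for \<open>u \<in> S\<^sub>a(w)\<close> with a point
  \<open>v\<^sub>0 \<in> K(w) \<inter> C\<^sub>0\<close> and comparing with the coercivity estimate gives
  \<open>h(\<parallel>u\<parallel>) \<parallel>u\<parallel> \<le> \<parallel>m\<parallel> (\<parallel>u\<parallel> + sup \<parallel>C\<^sub>0\<parallel>)\<close>, which bounds \<open>\<parallel>u\<parallel>\<close> because \<open>h \<rightarrow> \<infinity>\<close>.

  Closed graph: the weak limit \<open>u\<close> lies in \<open>K(w)\<close> by (H_K)(ii), and for \<open>v \<in> K(w)\<close> condition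
  (H_K)(i) yields strong approximations of \<open>u\<close> and \<open>v\<close> in \<open>K(w\<^sub>n)\<close>. By monotonicity (Minty's
  trick) the inequality at \<open>u\<^sub>n\<close> may be rewritten with the operator evaluated at the fixed point
  \<open>z = u + t (v - u)\<close>; it is then affine in \<open>u\<^sub>n\<close> and survives the weak limit, since \<open>\<phi>\<close> is weakly
  lower semicontinuous (its closed convex sublevel sets are weakly closed, by Hahn--Banach) and
  continuous on the interior of its domain (by Baire's theorem). Letting \<open>t \<rightarrow> 0\<close> and using the
  continuity of \<open>T(a, \<cdot>)\<close> gives the inequality at \<open>u\<close>.\<close>

section \<open>The Hahn--Banach theorem\<close>

definition sublinear :: "('v::real_vector \<Rightarrow> real) \<Rightarrow> bool" where
  "sublinear p \<longleftrightarrow> (\<forall>x y. p (x + y) \<le> p x + p y) \<and> (\<forall>s x. 0 \<le> s \<longrightarrow> p (s *\<^sub>R x) = s * p x)"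

text \<open>Partial linear functionals dominated by \<open>p\<close> are encoded by their graphs, so that
  Zorn's lemma can be applied to sets ordered by inclusion.\<close>

definition dominated_linear_graph :: "('v::real_vector \<Rightarrow> real) \<Rightarrow> ('v \<times> real) set \<Rightarrow> bool" where
  "dominated_linear_graph p G \<longleftrightarrow> (0, 0) \<in> G
     \<and> (\<forall>x a y b. (x, a) \<in> G \<longrightarrow> (y, b) \<in> G \<longrightarrow> (x + y, a + b) \<in> G)
     \<and> (\<forall>x a c. (x, a) \<in> G \<longrightarrow> (c *\<^sub>R x, c * a) \<in> G)
     \<and> (\<forall>x a b. (x, a) \<in> G \<longrightarrow> (x, b) \<in> G \<longrightarrow> a = b)
     \<and> (\<forall>x a. (x, a) \<in> G \<longrightarrow> a \<le> p x)"

lemma dominated_linear_graphD: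
  assumes "dominated_linear_graph p G"
  shows "(0, 0) \<in> G"
    and "(x, a) \<in> G \<Longrightarrow> (y, b) \<in> G \<Longrightarrow> (x + y, a + b) \<in> G"
    and "(x, a) \<in> G \<Longrightarrow> (c *\<^sub>R x, c * a) \<in> G"
    and "(x, a) \<in> G \<Longrightarrow> (x, b) \<in> G \<Longrightarrow> a = b"
    and "(x, a) \<in> G \<Longrightarrow> a \<le> p x"
  using assms unfolding dominated_linear_graph_def by blast+

lemma sublinear_zero: "sublinear p \<Longrightarrow> p 0 = 0"
  unfolding sublinear_def by (metis mult_zero_left order_refl scaleR_zero_left)

lemma dominated_linear_graph_line:
  assumes p: "sublinear p"
  shows "dominated_linear_graph p {(t *\<^sub>R z, t * p z) | t. True}"
proof -
  have p0: "p 0 = 0" using sublinear_zero[OF p] .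
  have hom: "\<And>s x. 0 \<le> s \<Longrightarrow> p (s *\<^sub>R x) = s * p x" using p unfolding sublinear_def by blast
  have "p (z + - z) \<le> p z + p (- z)" using p unfolding sublinear_def by blast
  hence neg: "- p z \<le> p (- z)" using p0 by simp
  have dominated: "t * p z \<le> p (t *\<^sub>R z)" for t
  proof (cases "0 \<le> t")
    case False
    have "t * p z = (- t) * (- p z)" by simp
    also have "\<dots> \<le> (- t) * p (- z)" using False neg by (intro mult_left_mono) auto
    also have "\<dots> = p (t *\<^sub>R z)" using False hom[of "- t" "- z"] by simp
    finally show ?thesis .
  qed (use hom in simp)
  have functional: "t * p z = s * p z" if "t *\<^sub>R z = s *\<^sub>R z" for t s
    using that p0 by (cases "z = 0") (auto dest: scaleR_cancel_right[THEN iffD1])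
  show ?thesis
    unfolding dominated_linear_graph_def
  proof (intro conjI allI impI)
    show "(0, 0) \<in> {(t *\<^sub>R z, t * p z) | t. True}" by (auto intro!: exI[of _ 0])
  next
    fix x a y b assume "(x, a) \<in> {(t *\<^sub>R z, t * p z) | t. True}" "(y, b) \<in> {(t *\<^sub>R z, t * p z) | t. True}"
    then obtain t s where "x = t *\<^sub>R z" "a = t * p z" "y = s *\<^sub>R z" "b = s * p z" by blast
    thus "(x + y, a + b) \<in> {(t *\<^sub>R z, t * p z) | t. True}"
      by (auto simp: scaleR_add_left distrib_right intro!: exI[of _ "t + s"])
  next
    fix x a c assume "(x, a) \<in> {(t *\<^sub>R z, t * p z) | t. True}"
    then obtain t where "x = t *\<^sub>R z" "a = t * p z" by blast
    thus "(c *\<^sub>R x, c * a) \<in> {(t *\<^sub>R z, t * p z) | t. True}" by (auto intro!: exI[of _ "c * t"])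
  qed (use dominated functional in auto)
qed

text \<open>The one-step extension: \<open>c\<close> lies between \<open>sup (a - p (x - y))\<close> and \<open>inf (p (x + y) - a)\<close>
  over the graph, which are ordered by subadditivity.\<close>

lemma dominated_linear_graph_extension_value:
  assumes p: "sublinear p" and G: "dominated_linear_graph p G"
  shows "\<exists>c. \<forall>x a t. (x, a) \<in> G \<longrightarrow> a + t * c \<le> p (x + t *\<^sub>R y)"
proof -
  have sub: "\<And>x y. p (x + y) \<le> p x + p y" and hom: "\<And>s x. 0 \<le> s \<Longrightarrow> p (s *\<^sub>R x) = s * p x"
    using p unfolding sublinear_def by blast+
  have key: "a1 - p (x1 - y) \<le> p (x2 + y) - a2" if "(x1, a1) \<in> G" "(x2, a2) \<in> G" for x1 a1 x2 a2
  proof -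
    have "a1 + a2 \<le> p (x1 + x2)" using dominated_linear_graphD(2,5)[OF G] that by blast
    also have "x1 + x2 = (x1 - y) + (x2 + y)" by simp
    also have "p \<dots> \<le> p (x1 - y) + p (x2 + y)" by (rule sub)
    finally show ?thesis by simp
  qed
  define S where "S = {a - p (x - y) | x a. (x, a) \<in> G}"
  have G0: "(0, 0) \<in> G" using dominated_linear_graphD(1)[OF G] .
  have "S \<noteq> {}" using G0 unfolding S_def by blast
  moreover have "bdd_above S" unfolding S_def bdd_above_def using key[OF _ G0] by auto
  ultimately obtain c where c_lower: "\<And>x a. (x, a) \<in> G \<Longrightarrow> a - p (x - y) \<le> c"
    and c_upper: "\<And>x a. (x, a) \<in> G \<Longrightarrow> c \<le> p (x + y) - a"
    using key by (intro that[of "Sup S"] cSup_upper cSup_least) (auto simp: S_def)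
  have scale: "(r *\<^sub>R x, r * a) \<in> G" if "(x, a) \<in> G" for r x a
    using dominated_linear_graphD(3)[OF G that] .
  have "a + t * c \<le> p (x + t *\<^sub>R y)" if xa: "(x, a) \<in> G" for x a t
  proof (cases t "0::real" rule: linorder_cases)
    case less
    have "(1 / - t) * a - p ((1 / - t) *\<^sub>R x - y) \<le> c" using c_lower[OF scale[OF xa]] .
    hence "(- t) * ((1 / - t) * a - p ((1 / - t) *\<^sub>R x - y)) \<le> (- t) * c"
      using less by (intro mult_left_mono) auto
    moreover have "(- t) *\<^sub>R ((1 / - t) *\<^sub>R x - y) = x + t *\<^sub>R y"
      using less by (simp add: algebra_simps)
    hence "p (x + t *\<^sub>R y) = (- t) * p ((1 / - t) *\<^sub>R x - y)"
      using hom[of "- t" "(1 / - t) *\<^sub>R x - y"] less by simp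
    ultimately show ?thesis using less by (simp add: algebra_simps)
  next
    case equal
    then show ?thesis using dominated_linear_graphD(5)[OF G xa] by simp
  next
    case greater
    have "c \<le> p ((1 / t) *\<^sub>R x + y) - (1 / t) * a" using c_upper[OF scale[OF xa]] .
    hence "t * c \<le> t * (p ((1 / t) *\<^sub>R x + y) - (1 / t) * a)"
      using greater by (intro mult_left_mono) auto
    moreover have "t *\<^sub>R ((1 / t) *\<^sub>R x + y) = x + t *\<^sub>R y"
      using greater by (simp add: algebra_simps)
    hence "p (x + t *\<^sub>R y) = t * p ((1 / t) *\<^sub>R x + y)"
      using hom[of t "(1 / t) *\<^sub>R x + y"] greater by simp
    ultimately show ?thesis using greater by (simp add: algebra_simps)
  qed
  thus ?thesis by blast
qed

lemma dominated_linear_graph_adjoin: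
  assumes G: "dominated_linear_graph p G" and y: "\<nexists>b. (y, b) \<in> G"
    and c: "\<And>x a t. (x, a) \<in> G \<Longrightarrow> a + t * c \<le> p (x + t *\<^sub>R y)"
  shows "dominated_linear_graph p {(x + t *\<^sub>R y, a + t * c) | x a t. (x, a) \<in> G}"
    (is "dominated_linear_graph p ?G'")
  unfolding dominated_linear_graph_def
proof (intro conjI allI impI)
  show "(0, 0) \<in> ?G'" using dominated_linear_graphD(1)[OF G] by force
next
  fix x a x' b assume "(x, a) \<in> ?G'" "(x', b) \<in> ?G'"
  then obtain x1 a1 t1 x2 a2 t2 where "(x1, a1) \<in> G" "(x2, a2) \<in> G"
    "x = x1 + t1 *\<^sub>R y" "a = a1 + t1 * c" "x' = x2 + t2 *\<^sub>R y" "b = a2 + t2 * c" by blast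
  moreover from this have "(x1 + x2 + (t1 + t2) *\<^sub>R y, a1 + a2 + (t1 + t2) * c) \<in> ?G'"
    using dominated_linear_graphD(2)[OF G] by blast
  ultimately show "(x + x', a + b) \<in> ?G'" by (simp add: algebra_simps)
next
  fix x a r assume "(x, a) \<in> ?G'"
  then obtain x1 a1 t where "(x1, a1) \<in> G" "x = x1 + t *\<^sub>R y" "a = a1 + t * c" by blast
  moreover from this have "(r *\<^sub>R x1 + (r * t) *\<^sub>R y, r * a1 + (r * t) * c) \<in> ?G'"
    using dominated_linear_graphD(3)[OF G] by blast
  ultimately show "(r *\<^sub>R x, r * a) \<in> ?G'" by (simp add: algebra_simps)
next
  fix x a b assume "(x, a) \<in> ?G'" "(x, b) \<in> ?G'"
  then obtain x1 a1 t1 x2 a2 t2 where h: "(x1, a1) \<in> G" "(x2, a2) \<in> G"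
    "x = x1 + t1 *\<^sub>R y" "a = a1 + t1 * c" "x = x2 + t2 *\<^sub>R y" "b = a2 + t2 * c" by blast
  have "t1 = t2"
  proof (rule ccontr)
    assume "t1 \<noteq> t2"
    have "(x1 + (-1) *\<^sub>R x2, a1 + (-1) * a2) \<in> G"
      using dominated_linear_graphD(2,3)[OF G] h(1,2) by blast
    hence "((1 / (t2 - t1)) *\<^sub>R (x1 + (-1) *\<^sub>R x2), (1 / (t2 - t1)) * (a1 + (-1) * a2)) \<in> G"
      using dominated_linear_graphD(3)[OF G] by blast
    moreover have "x1 + (-1) *\<^sub>R x2 = (t2 - t1) *\<^sub>R y" using h(3,5) by (simp add: algebra_simps)
    ultimately show False using y \<open>t1 \<noteq> t2\<close> by auto
  qed
  with h show "a = b" using dominated_linear_graphD(4)[OF G] by auto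
next
  fix x a assume "(x, a) \<in> ?G'"
  thus "a \<le> p x" using c by blast
qed

lemma dominated_linear_graph_extend:
  assumes "sublinear p" and G: "dominated_linear_graph p G" and y: "\<nexists>b. (y, b) \<in> G"
  obtains G' where "dominated_linear_graph p G'" "G \<subset> G'"
proof -
  obtain c where c: "\<And>x a t. (x, a) \<in> G \<Longrightarrow> a + t * c \<le> p (x + t *\<^sub>R y)"
    using dominated_linear_graph_extension_value[OF assms(1,2)] by blast
  let ?G' = "{(x + t *\<^sub>R y, a + t * c) | x a t. (x, a) \<in> G}"
  have "G \<subseteq> ?G'" by (force intro: exI[of _ 0])
  moreover have "(0 + 1 *\<^sub>R y, 0 + 1 * c) \<in> ?G'" using dominated_linear_graphD(1)[OF G] by blast
  hence "(y, c) \<in> ?G'" by simp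
  hence "G \<noteq> ?G'" using y by blast
  ultimately show ?thesis using that dominated_linear_graph_adjoin[OF G y c] by blast
qed

lemma dominated_linear_graph_Union_chain:
  assumes ch: "Ch \<in> chains {G. dominated_linear_graph p G}" and ne: "Ch \<noteq> {}"
  shows "dominated_linear_graph p (\<Union>Ch)"
proof -
  have G: "\<And>G. G \<in> Ch \<Longrightarrow> dominated_linear_graph p G" using ch unfolding chains_def by blast
  have common: "\<exists>G\<in>Ch. q1 \<in> G \<and> q2 \<in> G" if "q1 \<in> \<Union>Ch" "q2 \<in> \<Union>Ch" for q1 q2
    using that ch unfolding chains_def chain_subset_def by blast
  show ?thesis
    unfolding dominated_linear_graph_def
  proof (intro conjI allI impI)
    show "(0, 0) \<in> \<Union>Ch" using ne G dominated_linear_graphD(1) by blast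
  next
    fix x a y b assume "(x, a) \<in> \<Union>Ch" "(y, b) \<in> \<Union>Ch"
    thus "(x + y, a + b) \<in> \<Union>Ch" using common G dominated_linear_graphD(2) by blast
  next
    fix x a c assume "(x, a) \<in> \<Union>Ch"
    thus "(c *\<^sub>R x, c * a) \<in> \<Union>Ch" using G dominated_linear_graphD(3) by blast
  next
    fix x a b assume "(x, a) \<in> \<Union>Ch" "(x, b) \<in> \<Union>Ch"
    thus "a = b" using common G dominated_linear_graphD(4) by blast
  next
    fix x a assume "(x, a) \<in> \<Union>Ch"
    thus "a \<le> p x" using G dominated_linear_graphD(5) by blast
  qed
qed

lemma dominated_linear_graph_total:
  assumes G: "dominated_linear_graph p G" and total: "\<And>x. \<exists>a. (x, a) \<in> G"
  obtains g where "linear g" "\<And>x. g x \<le> p x" "\<And>x a. (x, a) \<in> G \<Longrightarrow> g x = a"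
proof -
  define g where "g x = (THE a. (x, a) \<in> G)" for x
  have g_eq: "g x = a" if "(x, a) \<in> G" for x a
    unfolding g_def using that dominated_linear_graphD(4)[OF G] by blast
  have gG: "(x, g x) \<in> G" for x using total[of x] g_eq by blast
  have "linear g"
  proof (rule linearI)
    show "g (x + y) = g x + g y" for x y by (rule g_eq, rule dominated_linear_graphD(2)[OF G gG gG])
    show "g (r *\<^sub>R x) = r *\<^sub>R g x" for r x using g_eq[OF dominated_linear_graphD(3)[OF G gG]] by simp
  qed
  moreover have "g x \<le> p x" for x using dominated_linear_graphD(5)[OF G gG] .
  ultimately show ?thesis using that g_eq by blast
qed

theorem hahn_banach_sublinear:
  assumes p: "sublinear p"
  obtains g where "linear g" "\<And>x. g x \<le> p x" "g z = p z"
proof -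
  let ?P = "{G. dominated_linear_graph p G \<and> (z, p z) \<in> G}"
  have "\<exists>M\<in>?P. \<forall>G\<in>?P. M \<subseteq> G \<longrightarrow> G = M"
  proof (rule Zorn_Lemma2, intro ballI)
    fix Ch assume Ch: "Ch \<in> chains ?P"
    show "\<exists>U\<in>?P. \<forall>G\<in>Ch. G \<subseteq> U"
    proof (cases "Ch = {}")
      case True
      have "(z, p z) \<in> {(t *\<^sub>R z, t * p z) | t. True}" by (auto intro!: exI[of _ 1])
      with True show ?thesis using dominated_linear_graph_line[OF p] by blast
    next
      case False
      have "Ch \<in> chains {G. dominated_linear_graph p G}" using Ch unfolding chains_def by blast
      hence "dominated_linear_graph p (\<Union>Ch)" using dominated_linear_graph_Union_chain False by blast
      moreover have "(z, p z) \<in> \<Union>Ch" using Ch False unfolding chains_def by blast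
      ultimately show ?thesis by blast
    qed
  qed
  then obtain M where M: "dominated_linear_graph p M" "(z, p z) \<in> M"
    and maximal: "\<And>G. dominated_linear_graph p G \<Longrightarrow> M \<subseteq> G \<Longrightarrow> G = M" by blast
  have "\<exists>a. (x, a) \<in> M" for x
    using dominated_linear_graph_extend[OF p M(1), of x] maximal M(2) by (metis psubsetE subsetD)
  with M show ?thesis using that dominated_linear_graph_total by metis
qed


section \<open>Strict separation and weak closedness\<close>

lemma infdist_geI: "A \<noteq> {} \<Longrightarrow> (\<And>a. a \<in> A \<Longrightarrow> b \<le> dist x a) \<Longrightarrow> b \<le> infdist x A"
  unfolding infdist_def by (auto intro: cINF_greatest)

lemma infdist_add_le:
  fixes Q :: "'v::real_normed_vector set"
  assumes ne: "Q \<noteq> {}" and add: "\<And>q1 q2. q1 \<in> Q \<Longrightarrow> q2 \<in> Q \<Longrightarrow> q1 + q2 \<in> Q"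
  shows "infdist (x + y) Q \<le> infdist x Q + infdist y Q"
proof -
  have "infdist (x + y) Q - dist y q2 \<le> dist x q1" if "q1 \<in> Q" "q2 \<in> Q" for q1 q2
  proof -
    have "infdist (x + y) Q \<le> dist (x + y) (q1 + q2)" using add[OF that] by (rule infdist_le)
    also have "\<dots> \<le> dist x q1 + dist y q2"
      using norm_triangle_ineq[of "x - q1" "y - q2"] by (simp add: dist_norm algebra_simps)
    finally show ?thesis by simp
  qed
  hence "infdist (x + y) Q - dist y q2 \<le> infdist x Q" if "q2 \<in> Q" for q2
    using that ne by (intro infdist_geI) auto
  hence "infdist (x + y) Q - infdist x Q \<le> infdist y Q"
    using ne by (intro infdist_geI) (auto simp: algebra_simps)
  thus ?thesis by simp
qed

lemma infdist_scaleR_conic: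
  fixes Q :: "'v::real_normed_vector set"
  assumes Q: "conic Q" "Q \<noteq> {}" and s: "0 < s"
  shows "infdist (s *\<^sub>R x) Q = s * infdist x Q"
proof (rule antisym)
  have "infdist (s *\<^sub>R x) Q / s \<le> dist x q" if "q \<in> Q" for q
  proof -
    have "infdist (s *\<^sub>R x) Q \<le> dist (s *\<^sub>R x) (s *\<^sub>R q)"
      using conic_mul[OF Q(1) that] s by (intro infdist_le) auto
    also have "\<dots> = s * dist x q" using s by (simp add: dist_norm flip: scaleR_diff_right)
    finally show ?thesis using s by (simp add: divide_le_eq mult.commute)
  qed
  hence "infdist (s *\<^sub>R x) Q / s \<le> infdist x Q" using Q(2) by (intro infdist_geI)
  thus "infdist (s *\<^sub>R x) Q \<le> s * infdist x Q" using s by (simp add: divide_le_eq mult.commute)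
next
  have "s * infdist x Q \<le> dist (s *\<^sub>R x) q" if "q \<in> Q" for q
  proof -
    have "s * infdist x Q \<le> s * dist x ((1 / s) *\<^sub>R q)"
      using conic_mul[OF Q(1) that] s by (intro mult_left_mono infdist_le) auto
    also have "\<dots> = norm (s *\<^sub>R (x - (1 / s) *\<^sub>R q))" using s by (simp add: dist_norm)
    also have "s *\<^sub>R (x - (1 / s) *\<^sub>R q) = s *\<^sub>R x - q" using s by (simp add: scaleR_diff_right)
    finally show ?thesis by (simp add: dist_norm)
  qed
  thus "s * infdist x Q \<le> infdist (s *\<^sub>R x) Q" using Q(2) by (intro infdist_geI)
qed

lemma sublinear_infdist_convex_cone:
  fixes Q :: "'v::real_normed_vector set"
  assumes Q: "convex_cone Q"
  shows "sublinear (\<lambda>x. infdist x Q)"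
proof -
  have Q0: "0 \<in> Q" using convex_cone_contains_0[OF Q] .
  have "infdist (s *\<^sub>R x) Q = s * infdist x Q" if "0 \<le> s" for s x
    using infdist_scaleR_conic[of Q s x] Q Q0 that unfolding convex_cone_def by (cases "s = 0") auto
  moreover have "infdist (x + y) Q \<le> infdist x Q + infdist y Q" for x y
    using infdist_add_le[of Q] Q0 convex_cone_add[OF Q] by blast
  ultimately show ?thesis unfolding sublinear_def by blast
qed

lemma convex_cone_hull_no_antipode:
  fixes D :: "'v::real_vector set"
  assumes D: "convex D" "0 \<notin> D" and d: "d \<in> D" and q: "q \<in> convex_cone hull D"
  shows "d + q \<noteq> 0"
proof
  assume sum0: "d + q = 0"
  have "convex_cone hull D = conic hull D"
    using convex_cone_hull_separate_nonempty[of D] d convex_hull_eq[of D] D(1) by auto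
  then obtain l d' where l: "0 \<le> l" "d' \<in> D" "q = l *\<^sub>R d'" using q by (auto simp: conic_hull_explicit)
  have "(1 / (1 + l)) *\<^sub>R d + (l / (1 + l)) *\<^sub>R d' \<in> D"
    using convexD[OF D(1) d l(2)] l(1) by (simp add: add_divide_distrib[symmetric])
  moreover have "(1 / (1 + l)) *\<^sub>R d + (l / (1 + l)) *\<^sub>R d' = (1 / (1 + l)) *\<^sub>R (d + q)"
    using l by (simp add: scaleR_add_right)
  ultimately show False using sum0 D(2) by simp
qed

text \<open>The sublinear functional is the distance to the cone generated by \<open>D\<close>; a Hahn--Banach
  functional attaining it at \<open>- d0\<close> is nonpositive on the cone, while the ball around \<open>d0\<close> keeps the
  distance from \<open>- d0\<close> to the cone at least \<open>r\<close>.\<close>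

lemma convex_avoiding_zero_separating_functional:
  fixes D :: "'v::real_normed_vector set"
  assumes D: "convex D" "0 \<notin> D" and ball: "cball d0 r \<subseteq> D"
  obtains g :: "'v \<Rightarrow>\<^sub>L real" where "\<And>d. d \<in> D \<Longrightarrow> g d \<le> 0" "r \<le> - g d0"
proof -
  define Q where "Q = convex_cone hull D"
  have Q: "convex_cone Q" unfolding Q_def by (rule convex_cone_convex_cone_hull)
  have Q0: "0 \<in> Q" using convex_cone_contains_0[OF Q] .
  obtain g where g: "linear g" "\<And>x. g x \<le> infdist x Q" "g (- d0) = infdist (- d0) Q"
    using hahn_banach_sublinear[OF sublinear_infdist_convex_cone[OF Q]] by blast
  have "r \<le> infdist (- d0) Q"
  proof (rule infdist_geI)
    show "r \<le> dist (- d0) q" if q: "q \<in> Q" for q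
    proof (rule ccontr)
      assume "\<not> r \<le> dist (- d0) q"
      hence "- q \<in> D" using ball by (auto simp: dist_norm norm_minus_commute algebra_simps)
      from convex_cone_hull_no_antipode[OF D this q[unfolded Q_def]] show False by simp
    qed
  qed (use Q0 in blast)
  hence "r \<le> - g d0" using g(3) linear_neg[OF g(1)] by simp
  moreover have "g d \<le> 0" if "d \<in> D" for d
    using g(2)[of d] that hull_inc[of d D convex_cone] unfolding Q_def by simp
  moreover have g_le: "g x \<le> norm x" for x using g(2)[of x] infdist_le[OF Q0, of x] by simp
  have "norm (g x) \<le> norm x * 1" for x using g_le[of x] g_le[of "- x"] linear_neg[OF g(1)] by auto
  hence "bounded_linear g"
    using g(1) by (intro bounded_linear_intro[where K = 1]) (auto simp: linear_add linear_scale)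
  ultimately show ?thesis using that[of "Blinfun g"] by (simp add: bounded_linear_Blinfun_apply)
qed

theorem closed_convex_strict_separation:
  fixes C :: "'v::real_normed_vector set"
  assumes C: "closed C" "convex C" and x0: "x0 \<notin> C"
  obtains g :: "'v \<Rightarrow>\<^sub>L real" and \<delta> where "\<delta> > 0" "\<And>c. c \<in> C \<Longrightarrow> g c + \<delta> \<le> g x0"
proof (cases "C = {}")
  case True
  with that show ?thesis by (metis empty_iff zero_less_one)
next
  case False
  then obtain c0 where c0: "c0 \<in> C" by blast
  define r where "r = infdist x0 C / 2"
  have r: "r > 0" using infdist_pos_not_in_closed[OF C(1) False x0] by (simp add: r_def)
  have far: "2 * r \<le> norm (c - x0)" if "c \<in> C" for c
    using infdist_le[OF that, of x0] by (simp add: r_def dist_norm norm_minus_commute)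
  define D where "D = (\<Union>c\<in>C. \<Union>e\<in>cball 0 r. {c - x0 + e})"
  have D_memI: "c - x0 + e \<in> D" if "c \<in> C" "norm e \<le> r" for c e
    unfolding D_def using that by (intro UN_I[of c] UN_I[of e]) auto
  have "D = (\<Union>x\<in>(\<lambda>c. c - x0) ` C. \<Union>e\<in>cball 0 r. {x + e})" unfolding D_def by blast
  hence "convex D" using convex_sums[OF convex_translation_subtract[OF C(2)] convex_cball] by simp
  moreover have "0 \<notin> D"
  proof
    assume "0 \<in> D"
    then obtain c e where "c \<in> C" "norm e \<le> r" "c - x0 = - e" unfolding D_def by (auto simp: add_eq_0_iff2)
    thus False using far r by force
  qed
  moreover have "cball (c0 - x0) r \<subseteq> D"
    using D_memI[OF c0, of "_ - (c0 - x0)"] by (auto simp: dist_norm norm_minus_commute)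
  ultimately obtain g :: "'v \<Rightarrow>\<^sub>L real" where g: "\<And>d. d \<in> D \<Longrightarrow> g d \<le> 0" "r \<le> - g (c0 - x0)"
    using convex_avoiding_zero_separating_functional by blast
  define z where "z = c0 - x0"
  have zne: "z \<noteq> 0" using far[OF c0] r by (auto simp: z_def)
  have "g c + r * r / norm z \<le> g x0" if c: "c \<in> C" for c
  proof -
    have "norm ((- r / norm z) *\<^sub>R z) \<le> r" using r zne by simp
    hence "g (c - x0 + (- r / norm z) *\<^sub>R z) \<le> 0" by (intro g(1) D_memI[OF c])
    hence "g c - g x0 + (r / norm z) * (- g z) \<le> 0"
      by (simp add: blinfun.add_right blinfun.diff_right blinfun.scaleR_right)
    moreover have "(r / norm z) * r \<le> (r / norm z) * (- g z)"
      using g(2) r unfolding z_def by (intro mult_left_mono) auto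
    ultimately show ?thesis by simp
  qed
  thus ?thesis using that[of "r * r / norm z" g] r zne by simp
qed

lemma weak_conv_closed_convex_mem:
  fixes C :: "'v::real_normed_vector set"
  assumes "closed C" "convex C" and xs: "\<And>n. xs n \<in> C" and "weak_conv xs x"
  shows "x \<in> C"
proof (rule ccontr)
  assume "x \<notin> C"
  then obtain g :: "'v \<Rightarrow>\<^sub>L real" and \<delta> where g: "\<delta> > 0" "\<And>c. c \<in> C \<Longrightarrow> g c + \<delta> \<le> g x"
    using closed_convex_strict_separation assms(1,2) by metis
  have "g x \<le> g x - \<delta>"
    using \<open>weak_conv xs x\<close> unfolding weak_conv_def
    by (rule tendsto_upperbound[OF spec[of _ g]]) (use g xs in \<open>auto simp: algebra_simps\<close>)
  thus False using g by simp
qed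


section \<open>Convex lower semicontinuous functions\<close>

lemma convex_efun_le_combination:
  assumes "convex_efun \<phi>" "\<phi> x \<le> ereal a" "\<phi> y \<le> ereal b" "0 \<le> t" "t \<le> 1"
  shows "\<phi> (t *\<^sub>R x + (1 - t) *\<^sub>R y) \<le> ereal (t * a + (1 - t) * b)"
proof -
  have "\<phi> (t *\<^sub>R x + (1 - t) *\<^sub>R y) \<le> ereal t * \<phi> x + ereal (1 - t) * \<phi> y"
    using assms(1,4,5) unfolding convex_efun_def by blast
  also have "\<dots> \<le> ereal t * ereal a + ereal (1 - t) * ereal b"
    by (intro add_mono ereal_mult_left_mono) (use assms in auto)
  finally show ?thesis by simp
qed

lemma convex_efun_sublevel: "convex_efun \<phi> \<Longrightarrow> convex {x. \<phi> x \<le> ereal c}"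
  unfolding convex_alt using convex_efun_le_combination[of \<phi> _ c _ c] by (auto simp: algebra_simps)

lemma proper_fun_edom_real: "proper_fun \<phi> \<Longrightarrow> x \<in> edom \<phi> \<Longrightarrow> \<phi> x = ereal (real_of_ereal (\<phi> x))"
  unfolding proper_fun_def edom_def by (cases "\<phi> x") auto

lemma weak_conv_subseq: "weak_conv xs x \<Longrightarrow> strict_mono r \<Longrightarrow> weak_conv (xs \<circ> r) x"
  unfolding weak_conv_def using LIMSEQ_subseq_LIMSEQ by (fastforce simp: o_def)

text \<open>The sublevel sets are closed and convex, hence weakly closed.\<close>

lemma convex_lsc_weak_conv_eventually_gt:
  assumes cv: "convex_efun \<phi>" and lsc: "lsc_efun \<phi>" and wc: "weak_conv us u" and c: "ereal c < \<phi> u"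
  shows "eventually (\<lambda>n. ereal c < \<phi> (us n)) sequentially"
proof (rule ccontr)
  assume "\<not> ?thesis"
  hence "\<forall>N. \<exists>n\<ge>N. \<phi> (us n) \<le> ereal c" unfolding eventually_sequentially by (auto simp: not_less)
  hence "infinite {n. \<phi> (us n) \<le> ereal c}" unfolding infinite_nat_iff_unbounded_le by blast
  then obtain r :: "nat \<Rightarrow> nat" where r: "strict_mono r" "\<And>n. r n \<in> {n. \<phi> (us n) \<le> ereal c}"
    using infinite_enumerate by blast
  have "u \<in> {x. \<phi> x \<le> ereal c}"
  proof (rule weak_conv_closed_convex_mem)
    show "closed {x. \<phi> x \<le> ereal c}" using lsc unfolding lsc_efun_def by blast
    show "convex {x. \<phi> x \<le> ereal c}" using cv by (rule convex_efun_sublevel)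
    show "(us \<circ> r) n \<in> {x. \<phi> x \<le> ereal c}" for n using r(2) by simp
    show "weak_conv (us \<circ> r) u" using wc r(1) by (rule weak_conv_subseq)
  qed
  thus False using c by simp
qed

text \<open>Baire category: the closed sublevel sets cover the open set \<open>S\<close>, so one of them has interior.\<close>

lemma lsc_efun_bounded_above_on_ball:
  fixes \<phi> :: "'v::banach \<Rightarrow> ereal"
  assumes lsc: "lsc_efun \<phi>" and S: "open S" "S \<noteq> {}" and fin: "\<And>y. y \<in> S \<Longrightarrow> \<phi> y < \<infinity>"
  obtains y0 \<rho> M where "\<rho> > 0" "ball y0 \<rho> \<subseteq> S" "\<And>y. y \<in> ball y0 \<rho> \<Longrightarrow> \<phi> y \<le> ereal M"
proof -
  define X where "X = top_of_set S"
  define F where "F k = S \<inter> {y. \<phi> y \<le> ereal (real k)}" for k :: nat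
  have "completely_metrizable_space X"
    unfolding X_def using S(1)
    by (intro completely_metrizable_space_openin completely_metrizable_space_euclidean) auto
  moreover have "closedin X (F k)" for k
    using lsc unfolding lsc_efun_def X_def F_def by (intro closedin_closed_Int) blast
  moreover have "\<Union>(range F) = S"
  proof (intro equalityI subsetI)
    fix y assume y: "y \<in> S"
    obtain k :: nat where "real_of_ereal (\<phi> y) \<le> real k" using real_arch_simple by blast
    moreover have "\<phi> y \<le> ereal (real_of_ereal (\<phi> y))" using fin[OF y] by (cases "\<phi> y") auto
    ultimately have "\<phi> y \<le> ereal (real k)" by (meson ereal_less_eq(3) order_trans)
    thus "y \<in> \<Union>(range F)" using y unfolding F_def by blast
  qed (auto simp: F_def)
  hence "X interior_of \<Union>(range F) \<noteq> {}"
    using S(2) interior_of_topspace[of "top_of_set S"] unfolding X_def by simp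
  ultimately obtain k where "X interior_of F k \<noteq> {}"
    using Baire_category_alt[of X "range F"] by auto
  then obtain U y0 where U: "openin X U" "y0 \<in> U" "U \<subseteq> F k" unfolding interior_of_def by blast
  hence "open U" "U \<subseteq> S" using openin_open_eq[OF S(1)] unfolding X_def by auto
  then obtain \<rho> where "\<rho> > 0" "ball y0 \<rho> \<subseteq> U" using U(2) open_contains_ball by blast
  thus ?thesis using that[of \<rho> y0 "real k"] U(3) \<open>U \<subseteq> S\<close> unfolding F_def by blast
qed

text \<open>A bound on a small ball around some \<open>y0\<close> near \<open>x\<close> is transported to a ball around \<open>x\<close>
  through midpoints with the reflection \<open>2x - y0\<close>.\<close>

lemma convex_lsc_bounded_above_near_interior:
  fixes \<phi> :: "'v::banach \<Rightarrow> ereal"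
  assumes pr: "proper_fun \<phi>" and cv: "convex_efun \<phi>" and lsc: "lsc_efun \<phi>"
    and x: "x \<in> interior (edom \<phi>)"
  obtains \<rho> B where "\<rho> > 0" "\<And>z. norm (z - x) < \<rho> \<Longrightarrow> \<phi> z \<le> ereal B"
proof -
  obtain R where R: "R > 0" "ball x R \<subseteq> edom \<phi>" using x by (meson mem_interior)
  have fin: "\<phi> y < \<infinity>" if "y \<in> ball x R" for y using R(2) that unfolding edom_def by blast
  obtain y0 \<rho> M where \<rho>: "\<rho> > 0" "ball y0 \<rho> \<subseteq> ball x R" and M: "\<And>y. y \<in> ball y0 \<rho> \<Longrightarrow> \<phi> y \<le> ereal M"
    using lsc_efun_bounded_above_on_ball[OF lsc open_ball _ fin] R(1) by (metis centre_in_ball empty_iff)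
  define y where "y = x + (x - y0)"
  have "y0 \<in> ball x R" using \<rho> centre_in_ball by blast
  hence "y \<in> edom \<phi>" using R(2) by (auto simp: y_def dist_norm norm_minus_commute)
  hence y_fin: "\<phi> y \<le> ereal (real_of_ereal (\<phi> y))" using proper_fun_edom_real[OF pr] by simp
  have "\<phi> z \<le> ereal ((1/2) * real_of_ereal (\<phi> y) + (1 - 1/2) * M)" if z: "norm (z - x) < \<rho> / 2" for z
  proof -
    define w where "w = y0 + 2 *\<^sub>R (z - x)"
    have w: "w \<in> ball y0 \<rho>" using z by (simp add: w_def dist_norm)
    have "z = (1/2) *\<^sub>R y + (1 - 1/2) *\<^sub>R w"
      by (simp add: y_def w_def algebra_simps) (simp flip: scaleR_add_left)
    thus ?thesis using convex_efun_le_combination[OF cv y_fin M[OF w], of "1/2"] by simp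
  qed
  thus ?thesis using that[of "\<rho> / 2"] \<rho>(1) by (meson half_gt_zero)
qed

lemma convex_efun_upper_estimate:
  fixes \<phi> :: "'v::real_normed_vector \<Rightarrow> ereal"
  assumes cv: "convex_efun \<phi>" and x: "\<phi> x = ereal a"
    and \<rho>: "\<rho> > 0" and B: "\<And>z. norm (z - x) < \<rho> \<Longrightarrow> \<phi> z \<le> ereal B" and \<epsilon>: "\<epsilon> > 0"
  obtains \<delta> where "\<delta> > 0" "\<And>z. norm (z - x) < \<delta> \<Longrightarrow> \<phi> z \<le> ereal (a + \<epsilon>)"
proof -
  define r where "r = \<rho> / 2"
  define D where "D = \<bar>B - a\<bar> + 1"
  have r: "r > 0" and D: "D > 0" using \<rho> by (auto simp: r_def D_def)
  define \<delta> where "\<delta> = min r (\<epsilon> * r / D)"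
  have "\<phi> z \<le> ereal (a + \<epsilon>)" if z: "norm (z - x) < \<delta>" for z
  proof (cases "z = x")
    case True thus ?thesis using x \<epsilon> by simp
  next
    case False
    define l where "l = norm (z - x) / r"
    have l: "0 < l" "l < 1" using False z r unfolding l_def \<delta>_def by auto
    define w where "w = x + (1 / l) *\<^sub>R (z - x)"
    have "norm (w - x) = r" using l r False unfolding w_def l_def by simp
    hence "\<phi> w \<le> ereal B" using r by (intro B) (simp add: r_def)
    moreover have "z = l *\<^sub>R w + (1 - l) *\<^sub>R x" using l unfolding w_def by (simp add: algebra_simps)
    ultimately have "\<phi> z \<le> ereal (l * B + (1 - l) * a)"
      using convex_efun_le_combination[OF cv _ eq_refl[OF x], of w B l] l by simp
    moreover have "l * (B - a) \<le> l * D" using l by (intro mult_left_mono) (auto simp: D_def)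
    moreover have "l * D < \<epsilon>"
    proof -
      have "norm (z - x) * D < \<epsilon> * r" using z D unfolding \<delta>_def by (simp add: pos_less_divide_eq)
      thus ?thesis using r D unfolding l_def by (simp add: field_simps)
    qed
    moreover have "l * B + (1 - l) * a = a + l * (B - a)" by (simp add: algebra_simps)
    ultimately have "\<phi> z \<le> ereal (l * B + (1 - l) * a)" "l * B + (1 - l) * a \<le> a + \<epsilon>" by linarith+
    thus ?thesis by (metis ereal_less_eq(3) order_trans)
  qed
  thus ?thesis using that[of \<delta>] r D \<epsilon> by (simp add: \<delta>_def)
qed

text \<open>A proper convex lower semicontinuous function on a Banach space is continuous on the interior
  of its domain; only the upper half of this is needed.\<close>

lemma convex_lsc_tendsto_eventually_le:
  fixes \<phi> :: "'v::banach \<Rightarrow> ereal"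
  assumes pr: "proper_fun \<phi>" and cv: "convex_efun \<phi>" and lsc: "lsc_efun \<phi>"
    and x: "x \<in> interior (edom \<phi>)" and xs: "xs \<longlonglongrightarrow> x" and \<epsilon>: "\<epsilon> > 0"
  shows "eventually (\<lambda>n. \<phi> (xs n) \<le> \<phi> x + ereal \<epsilon>) sequentially"
proof -
  have \<phi>x: "\<phi> x = ereal (real_of_ereal (\<phi> x))"
    using proper_fun_edom_real[OF pr] x interior_subset by blast
  obtain \<rho> B where "\<rho> > 0" "\<And>z. norm (z - x) < \<rho> \<Longrightarrow> \<phi> z \<le> ereal B"
    using convex_lsc_bounded_above_near_interior[OF pr cv lsc x] by blast
  then obtain \<delta> where \<delta>: "\<delta> > 0" "\<And>z. norm (z - x) < \<delta> \<Longrightarrow> \<phi> z \<le> ereal (real_of_ereal (\<phi> x) + \<epsilon>)"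
    using convex_efun_upper_estimate[OF cv \<phi>x _ _ \<epsilon>] by blast
  have "eventually (\<lambda>n. dist (xs n) x < \<delta>) sequentially" using xs \<delta>(1) tendsto_iff by blast
  thus ?thesis
  proof (rule eventually_mono)
    fix n assume "dist (xs n) x < \<delta>"
    hence "\<phi> (xs n) \<le> ereal (real_of_ereal (\<phi> x) + \<epsilon>)" using \<delta>(2) by (simp add: dist_norm)
    thus "\<phi> (xs n) \<le> \<phi> x + ereal \<epsilon>" by (subst \<phi>x) simp
  qed
qed


section \<open>The variational selection\<close>

lemma var_sel_subset: "var_sel T \<phi> K m a w \<subseteq> K w"
  unfolding var_sel_def by blast

lemma var_sel_ineq:
  fixes T :: "'b \<Rightarrow> 'v::real_normed_vector \<Rightarrow> ('v \<Rightarrow>\<^sub>L real)" and m :: "'v \<Rightarrow>\<^sub>L real"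
  assumes "u \<in> var_sel T \<phi> K m a w" "v \<in> K w" "\<phi> u = ereal (f u)" "\<phi> v = ereal (f v)"
  shows "m (v - u) \<le> T a u (v - u) + f v - f u"
  using assms unfolding var_sel_def by auto

lemma var_selI:
  fixes T :: "'b \<Rightarrow> 'v::real_normed_vector \<Rightarrow> ('v \<Rightarrow>\<^sub>L real)" and m :: "'v \<Rightarrow>\<^sub>L real"
  assumes "u \<in> K w" "\<phi> u = ereal (f u)" "\<And>v. v \<in> K w \<Longrightarrow> \<phi> v = ereal (f v)"
    and "\<And>v. v \<in> K w \<Longrightarrow> m (v - u) \<le> T a u (v - u) + f v - f u"
  shows "u \<in> var_sel T \<phi> K m a w"
  using assms unfolding var_sel_def by auto

lemma var_sel_bounded:
  fixes T :: "'b \<Rightarrow> 'v::real_normed_vector \<Rightarrow> ('v \<Rightarrow>\<^sub>L real)" and m :: "'v \<Rightarrow>\<^sub>L real"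
    and \<phi> :: "'v \<Rightarrow> ereal" and f :: "'v \<Rightarrow> real" and h :: "real \<Rightarrow> real"
  assumes K_sub: "\<And>w. w \<in> C \<Longrightarrow> K w \<subseteq> C" and fin: "\<And>x. x \<in> C \<Longrightarrow> \<phi> x = ereal (f x)"
    and C0: "bounded C0" and meets: "\<And>w. w \<in> C \<Longrightarrow> K w \<inter> C0 \<noteq> {}"
    and h: "filterlim h at_top at_top"
    and coercive: "\<And>v0 w. v0 \<in> C0 \<Longrightarrow> w \<in> C \<Longrightarrow>
        ereal (T a w (w - v0)) + \<phi> w - \<phi> v0 \<ge> ereal (h (norm w) * norm w)"
  shows "bounded (\<Union>w\<in>C. var_sel T \<phi> K m a w)"
proof -
  obtain B0 where B0: "\<And>v. v \<in> C0 \<Longrightarrow> norm v \<le> B0" using C0 unfolding bounded_iff by blast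
  define L where "L = norm m + norm m * \<bar>B0\<bar> + 1"
  have "eventually (\<lambda>s. L \<le> h s) at_top" using h by (simp add: filterlim_at_top)
  then obtain N where N: "\<And>s. s \<ge> N \<Longrightarrow> L \<le> h s" by (auto simp: eventually_at_top_linorder)
  have "norm u \<le> max N 1" if w: "w \<in> C" and u: "u \<in> var_sel T \<phi> K m a w" for w u
  proof (rule ccontr)
    assume "\<not> ?thesis"
    hence big: "N \<le> norm u" "1 < norm u" by auto
    obtain v0 where v0: "v0 \<in> K w" "v0 \<in> C0" using meets[OF w] by blast
    have uC: "u \<in> C" by (rule subsetD[OF K_sub[OF w] subsetD[OF var_sel_subset u]])
    have v0C: "v0 \<in> C" by (rule subsetD[OF K_sub[OF w] v0(1)])
    have ineq: "m (v0 - u) \<le> T a u (v0 - u) + f v0 - f u"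
      using var_sel_ineq[OF u v0(1) fin[OF uC] fin[OF v0C]] .
    have neg: "T a u (u - v0) = - T a u (v0 - u)" "m (u - v0) = - m (v0 - u)"
      by (metis blinfun.minus_right minus_diff_eq)+
    have "h (norm u) * norm u \<le> T a u (u - v0) + f u - f v0"
      using coercive[OF v0(2) uC] fin[OF uC] fin[OF v0C] by simp
    also have "\<dots> \<le> m (u - v0)" using ineq neg by linarith
    also have "\<dots> \<le> norm m * norm (u - v0)" using norm_blinfun[of m "u - v0"] by simp
    also have "\<dots> \<le> norm m * (norm u + \<bar>B0\<bar>)"
      using norm_triangle_ineq4[of u v0] B0[OF v0(2)] by (intro mult_left_mono) auto
    also have "\<dots> \<le> norm m * norm u + norm m * \<bar>B0\<bar> * norm u"
    proof -
      have "norm m * \<bar>B0\<bar> * 1 \<le> norm m * \<bar>B0\<bar> * norm u" using big by (intro mult_left_mono) auto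
      thus ?thesis by (simp add: distrib_left)
    qed
    also have "\<dots> < L * norm u"
      using big unfolding L_def distrib_right by auto
    also have "\<dots> \<le> h (norm u) * norm u" using N big by (intro mult_right_mono) auto
    finally show False by simp
  qed
  thus ?thesis unfolding bounded_iff by blast
qed

text \<open>Minty's trick: combining the variational inequalities at \<open>x\<close> tested with \<open>y1\<close> and \<open>y2\<close> and
  using monotonicity moves the operator from \<open>x\<close> to an arbitrary point \<open>z\<close>, at the cost of the
  distance from \<open>z\<close> to the combination of the test points.\<close>

lemma monotone_op_variational_shift:
  fixes F :: "'v::real_normed_vector \<Rightarrow> ('v \<Rightarrow>\<^sub>L real)" and m :: "'v \<Rightarrow>\<^sub>L real"
  assumes mono: "monotone_op F" and t: "0 \<le> t" "t \<le> 1"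
    and y1: "m (y1 - x) \<le> F x (y1 - x) + f y1 - f x"
    and y2: "m (y2 - x) \<le> F x (y2 - x) + f y2 - f x"
  shows "m (z - x) \<le> F z (z - x) + (norm (F x) + norm m) * norm ((1 - t) *\<^sub>R y1 + t *\<^sub>R y2 - z)
           + (1 - t) * f y1 + t * f y2 - f x"
proof -
  define y where "y = (1 - t) *\<^sub>R y1 + t *\<^sub>R y2"
  have y_x: "y - x = (1 - t) *\<^sub>R (y1 - x) + t *\<^sub>R (y2 - x)" unfolding y_def by (simp add: algebra_simps)
  have "(1 - t) * m (y1 - x) + t * m (y2 - x)
      \<le> (1 - t) * (F x (y1 - x) + f y1 - f x) + t * (F x (y2 - x) + f y2 - f x)"
    using y1 y2 t by (intro add_mono mult_left_mono) auto
  hence "m (y - x) \<le> F x (y - x) + (1 - t) * f y1 + t * f y2 - f x"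
    unfolding y_x blinfun.add_right blinfun.scaleR_right by (simp add: algebra_simps)
  moreover have "F x (z - x) \<le> F z (z - x)"
    using mono unfolding monotone_op_def by (metis blinfun.diff_left diff_ge_0_iff_ge)
  moreover have "F x (y - x) = F x (z - x) + F x (y - z)" "m (y - x) = m (z - x) + m (y - z)"
    by (simp_all flip: blinfun.add_right)
  moreover have "F x (y - z) \<le> norm (F x) * norm (y - z)" "- m (y - z) \<le> norm m * norm (y - z)"
    using norm_blinfun[of "F x" "y - z"] norm_blinfun[of m "y - z"] by auto
  ultimately show ?thesis unfolding y_def[symmetric] by (simp add: algebra_simps)
qed

lemma weak_conv_blinfun_diff:
  fixes g :: "'v::real_normed_vector \<Rightarrow>\<^sub>L real"
  shows "weak_conv us u \<Longrightarrow> (\<lambda>n. g (x - us n)) \<longlonglongrightarrow> g (x - u)"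
  unfolding weak_conv_def blinfun.diff_right by (intro tendsto_diff tendsto_const) blast

text \<open>Passing to the limit in the shifted inequality at \<open>z = u + t (v - u)\<close>: the approximations
  \<open>ps \<rightarrow> u\<close> and \<open>qs \<rightarrow> v\<close> are strong, so the error term vanishes and \<open>f\<close> is controlled from
  above, while along the weakly convergent \<open>us\<close> only lower semicontinuity is available.\<close>

lemma monotone_op_variational_limit:
  fixes F :: "'v::real_normed_vector \<Rightarrow> ('v \<Rightarrow>\<^sub>L real)" and m :: "'v \<Rightarrow>\<^sub>L real"
  assumes mono: "monotone_op F"
    and p: "\<And>n. m (ps n - us n) \<le> F (us n) (ps n - us n) + f (ps n) - f (us n)"
    and q: "\<And>n. m (qs n - us n) \<le> F (us n) (qs n - us n) + f (qs n) - f (us n)"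
    and bound: "\<And>n. norm (F (us n)) \<le> M"
    and us: "weak_conv us u" and ps: "ps \<longlonglongrightarrow> u" and qs: "qs \<longlonglongrightarrow> v"
    and f_ps: "\<And>\<epsilon>. \<epsilon> > 0 \<Longrightarrow> eventually (\<lambda>n. f (ps n) \<le> f u + \<epsilon>) sequentially"
    and f_qs: "\<And>\<epsilon>. \<epsilon> > 0 \<Longrightarrow> eventually (\<lambda>n. f (qs n) \<le> f v + \<epsilon>) sequentially"
    and f_us: "\<And>\<epsilon>. \<epsilon> > 0 \<Longrightarrow> eventually (\<lambda>n. f u - \<epsilon> < f (us n)) sequentially"
    and t: "0 < t" "t \<le> 1"
  shows "m (v - u) \<le> F (u + t *\<^sub>R (v - u)) (v - u) + f v - f u"
proof -
  define z where "z = u + t *\<^sub>R (v - u)"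
  define d where "d n = norm ((1 - t) *\<^sub>R ps n + t *\<^sub>R qs n - z)" for n
  have shift: "m (z - us n) \<le> F z (z - us n) + (M + norm m) * d n + (1 - t) * f (ps n) + t * f (qs n) - f (us n)" for n
  proof -
    have "(norm (F (us n)) + norm m) * d n \<le> (M + norm m) * d n"
      using bound[of n] by (intro mult_right_mono) (auto simp: d_def)
    thus ?thesis using monotone_op_variational_shift[OF mono _ _ p q, of t z n] t unfolding d_def by simp
  qed
  have "(\<lambda>n. (1 - t) *\<^sub>R ps n + t *\<^sub>R qs n - z) \<longlonglongrightarrow> (1 - t) *\<^sub>R u + t *\<^sub>R v - z"
    by (intro tendsto_intros ps qs)
  hence d: "d \<longlonglongrightarrow> 0" unfolding d_def z_def by (simp add: algebra_simps tendsto_norm_zero)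
  have approx: "0 \<le> F z (z - u) - m (z - u) + t * (f v - f u) + 2 * \<epsilon>" if \<epsilon>: "\<epsilon> > 0" for \<epsilon>
  proof (rule tendsto_lowerbound)
    show "(\<lambda>n. F z (z - us n) - m (z - us n) + (M + norm m) * d n + t * (f v - f u) + 2 * \<epsilon>)
          \<longlonglongrightarrow> F z (z - u) - m (z - u) + t * (f v - f u) + 2 * \<epsilon>"
    proof -
      have "(\<lambda>n. F z (z - us n) - m (z - us n)) \<longlonglongrightarrow> F z (z - u) - m (z - u)"
        by (intro tendsto_diff weak_conv_blinfun_diff[OF us])
      from tendsto_add[OF tendsto_add[OF this tendsto_mult_right_zero[OF d]] tendsto_const]
      show ?thesis by (simp add: add.assoc)
    qed
    have eq: "(1 - t) * (f u + \<epsilon>) + t * (f v + \<epsilon>) - (f u - \<epsilon>) = t * (f v - f u) + 2 * \<epsilon>"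
      by (simp add: algebra_simps)
    from f_ps[OF \<epsilon>] f_qs[OF \<epsilon>] f_us[OF \<epsilon>]
    show "eventually (\<lambda>n. 0 \<le> F z (z - us n) - m (z - us n) + (M + norm m) * d n
              + t * (f v - f u) + 2 * \<epsilon>) sequentially"
    proof eventually_elim
      case (elim n)
      have "(1 - t) * f (ps n) \<le> (1 - t) * (f u + \<epsilon>)" "t * f (qs n) \<le> t * (f v + \<epsilon>)"
        using elim t by (intro mult_left_mono; simp)+
      thus ?case using shift[of n] elim eq by linarith
    qed
  qed simp
  have z_u: "z - u = t *\<^sub>R (v - u)" by (simp add: z_def)
  have "0 \<le> t * (F z (v - u) - m (v - u) + f v - f u)"
  proof (rule field_le_epsilon)
    fix \<epsilon> :: real assume "0 < \<epsilon>"
    thus "0 \<le> t * (F z (v - u) - m (v - u) + f v - f u) + \<epsilon>"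
      using approx[of "\<epsilon> / 2"] unfolding z_u blinfun.scaleR_right by (simp add: algebra_simps)
  qed
  thus ?thesis using t by (simp add: zero_le_mult_iff z_def)
qed

lemma isCont_blinfun_segment_lower_bound:
  fixes F :: "'v::real_normed_vector \<Rightarrow> ('v \<Rightarrow>\<^sub>L real)"
  assumes "isCont F u" and bound: "\<And>t. 0 < t \<Longrightarrow> t \<le> 1 \<Longrightarrow> c \<le> F (u + t *\<^sub>R d) d"
  shows "c \<le> F u d"
proof (rule tendsto_lowerbound)
  have "(\<lambda>k. u + (1 / real (Suc k)) *\<^sub>R d) \<longlonglongrightarrow> u"
    using tendsto_add[OF tendsto_const tendsto_scaleR[OF LIMSEQ_inverse_real_of_nat tendsto_const], of u d]
    by (simp add: inverse_eq_divide)
  thus "(\<lambda>k. F (u + (1 / real (Suc k)) *\<^sub>R d) d) \<longlonglongrightarrow> F u d"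
    by (intro blinfun.tendsto isCont_tendsto_compose[OF assms(1)] tendsto_const)
  show "eventually (\<lambda>k. c \<le> F (u + (1 / real (Suc k)) *\<^sub>R d) d) sequentially"
    by (intro always_eventually allI bound) auto
qed simp

lemma bounded_operator_bounded_seq:
  assumes "bounded_operator T" and "bounded (range us)"
  obtains M where "\<And>n. norm (T a (us n)) \<le> M"
proof -
  have "bounded ({a} \<times> range us)" using assms(2) by (intro bounded_Times) auto
  hence "bounded ((\<lambda>(b, x). T b x) ` ({a} \<times> range us))" using assms(1) unfolding bounded_operator_def by blast
  then obtain M where "\<forall>y\<in>(\<lambda>(b, x). T b x) ` ({a} \<times> range us). norm y \<le> M" unfolding bounded_iff by blast
  thus ?thesis using that by force
qed

lemma var_sel_graph_weakly_closed:
  fixes T :: "'b::real_normed_vector \<Rightarrow> 'v::banach \<Rightarrow> ('v \<Rightarrow>\<^sub>L real)" and m :: "'v \<Rightarrow>\<^sub>L real" and \<phi> :: "'v \<Rightarrow> ereal"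
  assumes C: "closed C" and K_sub: "\<And>w. w \<in> C \<Longrightarrow> K w \<subseteq> C"
    and K_i: "\<And>xs x y. (\<forall>n. xs n \<in> C) \<Longrightarrow> weak_conv xs x \<Longrightarrow> y \<in> K x \<Longrightarrow>
               \<exists>ys. (\<forall>n. ys n \<in> C \<and> ys n \<in> K (xs n)) \<and> ys \<longlonglongrightarrow> y"
    and K_ii: "\<And>xs ys x y. (\<forall>n. xs n \<in> C) \<Longrightarrow> (\<forall>n. ys n \<in> C) \<Longrightarrow> (\<forall>n. ys n \<in> K (xs n)) \<Longrightarrow>
               weak_conv xs x \<Longrightarrow> weak_conv ys y \<Longrightarrow> y \<in> K x"
    and T_bdd: "bounded_operator T" and mono: "monotone_op (T a)" and cont: "continuous_on UNIV (T a)"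
    and pr: "proper_fun \<phi>" and cv: "convex_efun \<phi>" and lsc: "lsc_efun \<phi>"
    and dom: "C \<subseteq> interior (edom \<phi>)"
    and bdd: "bounded (\<Union>w\<in>C. var_sel T \<phi> K m a w)"
    and ws: "\<forall>n. ws n \<in> C" and sel: "\<forall>n. us n \<in> var_sel T \<phi> K m a (ws n)"
    and ws_w: "weak_conv ws w" and us_u: "weak_conv us u"
  shows "u \<in> var_sel T \<phi> K m a w"
proof -
  define f where "f x = real_of_ereal (\<phi> x)" for x
  have fin: "\<phi> x = ereal (f x)" if "x \<in> C" for x
    using proper_fun_edom_real[OF pr] that dom interior_subset unfolding f_def by blast
  have usK: "\<forall>n. us n \<in> K (ws n)" using subsetD[OF var_sel_subset sel[rule_format]] by blast
  have us: "\<forall>n. us n \<in> C" using subsetD[OF K_sub[OF ws[rule_format]] usK[rule_format]] by blast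
  have KwC: "K w \<subseteq> C"
  proof
    fix y assume "y \<in> K w"
    then obtain ys where "\<forall>n. ys n \<in> C" "ys \<longlonglongrightarrow> y" using K_i[OF ws ws_w] by blast
    thus "y \<in> C" using closed_sequentially[OF C] by blast
  qed
  have uK: "u \<in> K w" using K_ii[OF ws us usK ws_w us_u] .
  have "range us \<subseteq> (\<Union>w\<in>C. var_sel T \<phi> K m a w)" using sel ws by blast
  then obtain M where M: "\<And>n. norm (T a (us n)) \<le> M"
    using bounded_operator_bounded_seq[OF T_bdd bounded_subset[OF bdd]] by blast
  have f_usc: "eventually (\<lambda>n. f (xs n) \<le> f x + \<epsilon>) sequentially"
    if "\<And>n. xs n \<in> C" "x \<in> C" "xs \<longlonglongrightarrow> x" "\<epsilon> > 0" for xs x \<epsilon>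
    using convex_lsc_tendsto_eventually_le[OF pr cv lsc _ that(3,4)] that(1,2) dom fin
    by (auto elim!: eventually_mono)
  have f_lsc: "eventually (\<lambda>n. f u - \<epsilon> < f (us n)) sequentially" if "\<epsilon> > 0" for \<epsilon>
    using convex_lsc_weak_conv_eventually_gt[OF cv lsc us_u, of "f u - \<epsilon>"] that us uK KwC fin
    by (auto elim!: eventually_mono)
  have "m (v - u) \<le> T a u (v - u) + f v - f u" if v: "v \<in> K w" for v
  proof -
    obtain ps where ps: "\<forall>n. ps n \<in> C \<and> ps n \<in> K (ws n)" "ps \<longlonglongrightarrow> u" using K_i[OF ws ws_w uK] by blast
    obtain qs where qs: "\<forall>n. qs n \<in> C \<and> qs n \<in> K (ws n)" "qs \<longlonglongrightarrow> v" using K_i[OF ws ws_w v] by blast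
    have u_C: "u \<in> C" and v_C: "v \<in> C" using uK v KwC by blast+
    have "m (v - u) - f v + f u \<le> T a (u + t *\<^sub>R (v - u)) (v - u)" if t: "0 < t" "t \<le> 1" for t
    proof -
      have "m (xs n - us n) \<le> T a (us n) (xs n - us n) + f (xs n) - f (us n)"
        if "xs n \<in> C" "xs n \<in> K (ws n)" for xs n
        using var_sel_ineq[OF sel[rule_format] that(2) fin fin] that(1) us by blast
      hence "m (v - u) \<le> T a (u + t *\<^sub>R (v - u)) (v - u) + f v - f u"
        using ps qs u_C v_C
        by (intro monotone_op_variational_limit[OF mono _ _ M us_u ps(2) qs(2) _ _ f_lsc t] f_usc) auto
      thus ?thesis by simp
    qed
    moreover have "isCont (T a) u" using cont by (simp add: continuous_on_eq_continuous_at)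
    ultimately have "m (v - u) - f v + f u \<le> T a u (v - u)" by (rule isCont_blinfun_segment_lower_bound[rotated])
    thus ?thesis by simp
  qed
  thus ?thesis using uK KwC fin by (intro var_selI[where f = f]) auto
qed

theorem mainTheorem3:
  fixes C :: "'v::banach set"
    and A :: "'b::banach set"
    and T :: "'b \<Rightarrow> 'v \<Rightarrow> ('v \<Rightarrow>\<^sub>L real)"
    and \<phi> :: "'v \<Rightarrow> ereal"
    and K :: "'v \<Rightarrow> 'v set"
    and m :: "'v \<Rightarrow>\<^sub>L real"
    and C0 :: "'v set"
    and h :: "real \<Rightarrow> real"
    and a :: 'b
  assumes refl: "reflexive_space TYPE('v)"
    and C_ne: "C \<noteq> {}" and C_closed: "closed C" and C_convex: "convex C"
    and A_ne: "A \<noteq> {}"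
    (* (H_T) *)
    and T_bdd: "bounded_operator T"
    and T_lin: "\<And>u. linear (\<lambda>b. T b u)"
    and T_mono: "\<And>b. b \<in> A \<Longrightarrow> monotone_op (T b)"
    and T_cont: "\<And>b. b \<in> A \<Longrightarrow> continuous_on UNIV (T b)"
    (* (H_phi) *)
    and phi_proper: "proper_fun \<phi>" and phi_convex: "convex_efun \<phi>"
    and phi_lsc: "lsc_efun \<phi>" and C_dom: "C \<subseteq> interior (edom \<phi>)"
    (* (H_K) *)
    and K_sub: "\<And>u. u \<in> C \<Longrightarrow> K u \<subseteq> C"
    and K_ne: "\<And>u. u \<in> C \<Longrightarrow> K u \<noteq> {}"
    and K_closed: "\<And>u. u \<in> C \<Longrightarrow> closed (K u)"
    and K_convex: "\<And>u. u \<in> C \<Longrightarrow> convex (K u)"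
    and K_i: "\<And>xs x y. (\<forall>n. xs n \<in> C) \<Longrightarrow> weak_conv xs x \<Longrightarrow> y \<in> K x \<Longrightarrow>
               \<exists>ys. (\<forall>n. ys n \<in> C \<and> ys n \<in> K (xs n)) \<and> ys \<longlonglongrightarrow> y"
    and K_ii: "\<And>xs ys x y. (\<forall>n. xs n \<in> C) \<Longrightarrow> (\<forall>n. ys n \<in> C) \<Longrightarrow> (\<forall>n. ys n \<in> K (xs n)) \<Longrightarrow>
               weak_conv xs x \<Longrightarrow> weak_conv ys y \<Longrightarrow> y \<in> K x"
    (* (H_0) *)
    and C0_bdd: "bounded C0"
    and C0_meets: "\<And>u. u \<in> C \<Longrightarrow> K u \<inter> C0 \<noteq> {}"
    and h_lim: "filterlim h at_top at_top"
    and coercive: "\<And>v0 b w. v0 \<in> C0 \<Longrightarrow> b \<in> A \<Longrightarrow> w \<in> C \<Longrightarrow>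
        ereal (blinfun_apply (T b w) (w - v0)) + \<phi> w - \<phi> v0 \<ge> ereal (h (norm w) * norm w)"
    and a_in: "a \<in> A"
  shows "(\<forall>ws us w u. (\<forall>n. ws n \<in> C) \<longrightarrow> (\<forall>n. us n \<in> C) \<longrightarrow>
            (\<forall>n. us n \<in> var_sel T \<phi> K m a (ws n)) \<longrightarrow>
            weak_conv ws w \<longrightarrow> weak_conv us u \<longrightarrow> u \<in> var_sel T \<phi> K m a w)
         \<and> bounded (\<Union>w\<in>C. var_sel T \<phi> K m a w)"
proof -
  have fin: "\<phi> x = ereal (real_of_ereal (\<phi> x))" if "x \<in> C" for x
    using proper_fun_edom_real[OF phi_proper] C_dom interior_subset that by blast
  have bdd: "bounded (\<Union>w\<in>C. var_sel T \<phi> K m a w)"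
    by (rule var_sel_bounded[where f = "\<lambda>x. real_of_ereal (\<phi> x)"])
      (fact K_sub fin C0_bdd C0_meets h_lim coercive[OF _ a_in])+
  moreover have "u \<in> var_sel T \<phi> K m a w"
    if "\<forall>n. ws n \<in> C" "\<forall>n. us n \<in> var_sel T \<phi> K m a (ws n)" "weak_conv ws w" "weak_conv us u"
    for ws us w u
    using var_sel_graph_weakly_closed[OF C_closed K_sub K_i K_ii T_bdd T_mono[OF a_in] T_cont[OF a_in]
        phi_proper phi_convex phi_lsc C_dom bdd that] .
  ultimately show ?thesis by blast
qed

end
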